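(* Let $f(x)=a_nx^n+a_{n-1}x^{n-1}+\dots+a_1x+a_0\in\mathbb{Z}[x]$. Suppose that there exists a prime $p$ such that $p\nmid a_n$, $p\mid a_i$ for all $0\leq i\leq n-1$, $p^2\mid a_j$ for all $0\leq j\leq\lfloor n/2\rfloor$, and $p^3\nmid a_0$. Then: (1) if $n$ is odd, $f(x)$ is irreducible over $\mathbb{Z}$; (2) if $n$ is even, then either $f(x)$ is irreducible over $\mathbb{Z}$, or $f(x)$ is a product of exactly two irreducible polynomials in $\mathbb{Z}[x]$ of equal degree, each of which is Eisenstein with respect to $p$.
   Context: A nonconstant polynomial in $\mathbb{Z}[x]$ is called reducible over $\mathbb{Z}$ if it can be written as a product of two nonconstant polynomials in $\mathbb{Z}[x]$; otherwise it is irreducible over $\mathbb{Z}$. A polynomial $b_rx^r+\dots+b_1x+b_0\in\mathbb{Z}[x]$ of positive degree $r$ is Eisenstein with respect to a prime $p$ if $p\nmid b_r$, $p\mid b_i$ for all $0\leq i\leq r-1$, and $p^2\nmid b_0$. *)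

theory Defs
  imports "HOL-Computational_Algebra.Computational_Algebra"
begin

text \<open>Reducibility over Z in the paper's sense: a nonconstant polynomial that is a
product of two nonconstant integer polynomials. (This differs from the library
notion irreducible, which also treats constant non-unit factors.)\<close>

definition reducible_Z :: "int poly \<Rightarrow> bool" where
  "reducible_Z f \<longleftrightarrow> degree f > 0 \<and>
     (\<exists>g h. degree g > 0 \<and> degree h > 0 \<and> f = g * h)"

definition irreducible_Z :: "int poly \<Rightarrow> bool" where
  "irreducible_Z f \<longleftrightarrow> degree f > 0 \<and> \<not> reducible_Z f"

definition eisenstein_wrt :: "int \<Rightarrow> int poly \<Rightarrow> bool" where
  "eisenstein_wrt p b \<longleftrightarrow> degree b > 0 \<and> \<not> p dvd lead_coeff b \<and>
     (\<forall>i < degree b. p dvd coeff b i) \<and> \<not> p^2 dvd coeff b 0"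

end

theory Submission
  imports Defs
begin

text \<open>
  Suppose \<open>f = g * h\<close> with both factors nonconstant. Modulo \<open>p\<close> the product is the monomial
  \<open>a\<^sub>n x\<^sup>n\<close>, so both factors are monomials modulo \<open>p\<close>: all their non-leading coefficients
  are divisible by \<open>p\<close>. Since \<open>a\<^sub>0 = g\<^sub>0 h\<^sub>0\<close> with \<open>p\<close> dividing both and \<open>p\<^sup>3 \<nmid> a\<^sub>0\<close>,
  neither constant term is divisible by \<open>p\<^sup>2\<close>, so both factors are Eisenstein, hence irreducible.
  If \<open>deg g < deg h\<close>, then modulo \<open>p\<^sup>2\<close> the coefficient of \<open>x\<^bsup>deg g\<^esup>\<close> in \<open>f\<close> is
  \<open>lc(g) h\<^sub>0 \<noteq> 0\<close>, contradicting \<open>p\<^sup>2 | a\<^sub>j\<close> for \<open>j \<le> n/2\<close>; so the degrees agree and \<open>n\<close> is even.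
\<close>

lemma not_dvd_sum_if_single_term_not_dvd:
  fixes d :: "'a :: comm_ring_1"
  assumes "finite A" "a \<in> A" "\<not> d dvd f a" "\<forall>i\<in>A - {a}. d dvd f i"
  shows "\<not> d dvd sum f A"
proof
  assume "d dvd sum f A"
  moreover have "sum f A = f a + sum f (A - {a})"
    using assms(1,2) by (simp add: sum.remove)
  moreover have "d dvd sum f (A - {a})"
    using assms(4) by (intro dvd_sum) auto
  ultimately have "d dvd f a" by (metis dvd_add_left_iff)
  with assms(3) show False by simp
qed

lemma prime_elem_not_dvd_coeff_mult_least:
  fixes g h :: "'a :: idom poly"
  assumes p: "prime_elem p"
    and i: "\<not> p dvd coeff g i" "\<forall>k<i. p dvd coeff g k"
    and j: "\<not> p dvd coeff h j" "\<forall>k<j. p dvd coeff h k"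
  shows "\<not> p dvd coeff (g * h) (i + j)"
  unfolding coeff_mult
proof (rule not_dvd_sum_if_single_term_not_dvd[where a = i])
  show "\<not> p dvd coeff g i * coeff h (i + j - i)"
    using i(1) j(1) p by (simp add: prime_elem_dvd_mult_iff)
  show "\<forall>k\<in>{..i + j} - {i}. p dvd coeff g k * coeff h (i + j - k)"
  proof
    fix k assume "k \<in> {..i + j} - {i}"
    then consider "k < i" | "i < k" "k \<le> i + j" by fastforce
    then show "p dvd coeff g k * coeff h (i + j - k)"
    proof cases
      case 1 with i(2) show ?thesis by simp
    next
      case 2 then have "i + j - k < j" by linarith
      with j(2) show ?thesis by simp
    qed
  qed
qed auto

lemma prime_elem_dvd_lower_coeffs_factor:
  fixes g h :: "'a :: idom poly"
  assumes p: "prime_elem p"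
    and lead: "\<not> p dvd lead_coeff (g * h)"
    and lower: "\<forall>i<degree (g * h). p dvd coeff (g * h) i"
  shows "\<forall>i<degree g. p dvd coeff g i"
proof -
  have "g \<noteq> 0" "h \<noteq> 0" using lead by auto
  then have deg: "degree (g * h) = degree g + degree h" by (rule degree_mult_eq)
  have "\<not> p dvd lead_coeff g" "\<not> p dvd lead_coeff h"
    using lead by (auto simp: lead_coeff_mult)
  then obtain i where "i \<le> degree g" "\<not> p dvd coeff g i" and gi: "\<forall>k<i. p dvd coeff g k"
    using ex_least_nat_le[of "\<lambda>k. \<not> p dvd coeff g k"] by auto
  obtain j where "j \<le> degree h" "\<not> p dvd coeff h j" "\<forall>k<j. p dvd coeff h k"
    using ex_least_nat_le[of "\<lambda>k. \<not> p dvd coeff h k"] \<open>\<not> p dvd lead_coeff h\<close> by auto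
  have "\<not> p dvd coeff (g * h) (i + j)"
    by (rule prime_elem_not_dvd_coeff_mult_least) fact+
  with lower have "degree g + degree h \<le> i + j" unfolding deg by (meson not_le)
  with \<open>i \<le> degree g\<close> \<open>j \<le> degree h\<close> have "i = degree g" by linarith
  with gi show ?thesis by simp
qed

lemma prime_elem_sq_not_dvd_coeff_mult_degree:
  fixes g h :: "'a :: {idom, algebraic_semidom} poly"
  assumes p: "prime_elem p"
    and g: "\<forall>i<degree g. p dvd coeff g i" "\<not> p dvd lead_coeff g"
    and h: "\<forall>i<degree h. p dvd coeff h i" "\<not> p\<^sup>2 dvd coeff h 0"
    and less: "degree g < degree h"
  shows "\<not> p\<^sup>2 dvd coeff (g * h) (degree g)"
  unfolding coeff_mult
proof (rule not_dvd_sum_if_single_term_not_dvd[where a = "degree g"])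
  show "\<not> p\<^sup>2 dvd coeff g (degree g) * coeff h (degree g - degree g)"
  proof
    assume "p\<^sup>2 dvd coeff g (degree g) * coeff h (degree g - degree g)"
    then have "p\<^sup>2 dvd coeff g (degree g) * coeff h 0" by simp
    then have "p\<^sup>2 dvd coeff h 0" by (rule prime_power_dvd_multD[OF p _ _ g(2)]) simp
    with h(2) show False ..
  qed
  show "\<forall>i\<in>{..degree g} - {degree g}. p\<^sup>2 dvd coeff g i * coeff h (degree g - i)"
  proof
    fix i assume "i \<in> {..degree g} - {degree g}"
    then have "p dvd coeff g i" "p dvd coeff h (degree g - i)"
      using g(1) h(1) less by auto
    then show "p\<^sup>2 dvd coeff g i * coeff h (degree g - i)"
      unfolding power2_eq_square by (rule mult_dvd_mono)
  qed
qed auto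

lemma eisenstein_imp_irreducible_Z:
  assumes p: "prime p" and eis: "eisenstein_wrt p g"
  shows "irreducible_Z g"
  unfolding irreducible_Z_def reducible_Z_def
proof (intro conjI notI)
  show "0 < degree g" using eis unfolding eisenstein_wrt_def by simp
  assume "0 < degree g \<and> (\<exists>u v. 0 < degree u \<and> 0 < degree v \<and> g = u * v)"
  then obtain u v where u: "0 < degree u" and v: "0 < degree v" and g: "g = u * v" by auto
  have lead: "\<not> p dvd lead_coeff (u * v)" "\<not> p dvd lead_coeff (v * u)"
    and lower: "\<forall>i<degree (u * v). p dvd coeff (u * v) i" "\<forall>i<degree (v * u). p dvd coeff (v * u) i"
    using eis g unfolding eisenstein_wrt_def by (simp_all add: mult.commute)
  have "p dvd coeff u 0" "p dvd coeff v 0"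
    using prime_elem_dvd_lower_coeffs_factor[OF _ lead(1) lower(1)]
          prime_elem_dvd_lower_coeffs_factor[OF _ lead(2) lower(2)] p u v by auto
  then have "p\<^sup>2 dvd coeff g 0"
    unfolding g coeff_mult_0 power2_eq_square by (rule mult_dvd_mono)
  with eis show False unfolding eisenstein_wrt_def by simp
qed

lemma eisenstein_wrt_factor:
  fixes g h :: "int poly"
  assumes p: "prime p" and dg: "0 < degree g" and dh: "0 < degree h"
    and lead: "\<not> p dvd lead_coeff (g * h)"
    and lower: "\<forall>i<degree (g * h). p dvd coeff (g * h) i"
    and const: "\<not> p ^ 3 dvd coeff (g * h) 0"
  shows "eisenstein_wrt p g"
proof -
  have lower_g: "\<forall>i<degree g. p dvd coeff g i"
    using prime_elem_dvd_lower_coeffs_factor[OF prime_imp_prime_elem[OF p] lead lower] .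
  have lower_h: "\<forall>i<degree h. p dvd coeff h i"
    using prime_elem_dvd_lower_coeffs_factor[OF prime_imp_prime_elem[OF p], of h g] lead lower
    by (simp add: mult.commute)
  have "\<not> p\<^sup>2 dvd coeff g 0"
  proof
    assume "p\<^sup>2 dvd coeff g 0"
    moreover have "p dvd coeff h 0" using lower_h dh by simp
    ultimately have "p\<^sup>2 * p dvd coeff g 0 * coeff h 0" by (rule mult_dvd_mono)
    with const show False by (simp add: coeff_mult_0 power_numeral_reduce mult.assoc)
  qed
  with dg lower_g lead show ?thesis
    unfolding eisenstein_wrt_def by (auto simp: lead_coeff_mult)
qed

theorem theorem2p2:
  fixes f :: "int poly" and p :: int and n :: nat
  assumes "degree f = n"
    and "prime p"
    and "\<not> p dvd coeff f n"
    and "\<forall>i < n. p dvd coeff f i"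
    and "\<forall>j \<le> n div 2. p^2 dvd coeff f j"
    and "\<not> p^3 dvd coeff f 0"
  shows "(odd n \<longrightarrow> irreducible_Z f) \<and>
         (even n \<longrightarrow> irreducible_Z f \<or>
            (\<exists>g h. f = g * h \<and> irreducible_Z g \<and> irreducible_Z h \<and>
                   degree g = degree h \<and> eisenstein_wrt p g \<and> eisenstein_wrt p h))"
proof (cases "irreducible_Z f")
  case False
  have "p dvd coeff f 0"
    using assms(5) dvd_trans[of p "p\<^sup>2"] by (auto simp: power2_eq_square)
  with assms(3) have "n \<noteq> 0" by (metis gr0I)
  with False assms(1) obtain g h where dg: "0 < degree g" and dh: "0 < degree h" and f: "f = g * h"
    unfolding irreducible_Z_def reducible_Z_def by auto
  have eg: "eisenstein_wrt p g" and eh: "eisenstein_wrt p h"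
    using eisenstein_wrt_factor[of p h g] eisenstein_wrt_factor[of p g h]
          assms dg dh f by (simp_all add: mult.commute)
  have "degree g + degree h = n" using assms(1) f dg dh by (metis degree_0 degree_mult_eq less_irrefl)
  then have "degree g = degree h"
    using prime_elem_sq_not_dvd_coeff_mult_degree[of p g h]
          prime_elem_sq_not_dvd_coeff_mult_degree[of p h g]
          eg eh assms(2,5) f unfolding eisenstein_wrt_def
    by (cases "degree g" "degree h" rule: linorder_cases) (auto simp: mult.commute)
  with \<open>degree g + degree h = n\<close> show ?thesis
    using f eg eh eisenstein_imp_irreducible_Z[OF assms(2)] by auto
qed simp

end
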